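(* $\mathrm{Sort}(\mathrm{SC}_{\underline{32}1})$ is not a permutation class.
   Context: $\mathfrak S_n$ is the set of permutations of $\{1,\dots,n\}$. A permutation $\pi$ contains a (classical) permutation $\tau$ if some subsequence of $\pi$ has the same relative order as $\tau$. A permutation class is a set $\Pi$ of permutations such that every permutation contained in some $\pi\in\Pi$ is also in $\Pi$. A vincular pattern is a permutation with some entries underlined; a sequence contains it if it has a subsequence with the same relative order in which entries corresponding to adjacent underlined entries occupy consecutive positions. An occurrence of $\underline{32}1$ is $a_j a_{j+1} a_l$ with $l>j+1$ and $a_l<a_{j+1}<a_j$. For a pattern $\sigma$, the map $\mathrm{SC}_\sigma$ acts on $\tau$: read entries left to right; when the next entry $x$ is read, if pushing $x$ yields a stack whose entries read top to bottom (stack adjacency = consecutive positions) avoid $\sigma$, push $x$; otherwise pop the top stack entry to the output and repeat. At the end pop all remaining entries; the output is $\mathrm{SC}_\sigma(\tau)$. West's stack-sorting map is $s=\mathrm{SC}_{21}$. $\mathrm{Sort}_n(\mathrm{SC}_\sigma)=\{\tau\in\mathfrak S_n : s(\mathrm{SC}_\sigma(\tau))=12\cdots n\}$ and $\mathrm{Sort}(\mathrm{SC}_\sigma)=\bigcup_{n\ge1}\mathrm{Sort}_n(\mathrm{SC}_\sigma)$. *)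

theory Defs
  imports Main
begin

definition is_perm :: "nat list \<Rightarrow> bool" where
  "is_perm xs \<longleftrightarrow> distinct xs \<and> set xs = {1..length xs}"

definition Sn :: "nat \<Rightarrow> nat list set" where
  "Sn n = {xs. is_perm xs \<and> length xs = n}"

definition same_order :: "nat list \<Rightarrow> nat list \<Rightarrow> bool" where
  "same_order a b \<longleftrightarrow> length a = length b \<and>
     (\<forall>i < length a. \<forall>j < length a. (a ! i < a ! j) \<longleftrightarrow> (b ! i < b ! j))"

text \<open>A vincular pattern is a pair (tau, U): tau a permutation, and i \<in> U (0-indexed)
  means that entries i and i+1 of tau are underlined together (adjacent underlined),
  so the corresponding entries must occupy consecutive positions.\<close>
definition vcontains :: "nat list \<Rightarrow> nat list \<times> nat set \<Rightarrow> bool" where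
  "vcontains xs p \<longleftrightarrow> (case p of (tau, U) \<Rightarrow>
     (\<exists>idx. length idx = length tau \<and> sorted_wrt (<) idx \<and> (\<forall>k\<in>set idx. k < length xs) \<and>
        same_order (map (\<lambda>k. xs ! k) idx) tau \<and>
        (\<forall>i\<in>U. Suc i < length tau \<longrightarrow> idx ! Suc i = Suc (idx ! i))))"

definition avoids :: "nat list \<Rightarrow> nat list \<times> nat set \<Rightarrow> bool" where
  "avoids xs p \<longleftrightarrow> \<not> vcontains xs p"

definition contains :: "nat list \<Rightarrow> nat list \<Rightarrow> bool" where
  "contains pi tau \<longleftrightarrow> vcontains pi (tau, {})"

text \<open>Pattern-avoiding stack machine. Arguments: pattern, remaining input, stack (top first),
  output so far.\<close>
function sc_aux :: "nat list \<times> nat set \<Rightarrow> nat list \<Rightarrow> nat list \<Rightarrow> nat list \<Rightarrow> nat list" where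
  "sc_aux p [] stk out = out @ stk"
| "sc_aux p (x # xs) stk out =
     (if avoids (x # stk) p then sc_aux p xs (x # stk) out
      else (case stk of [] \<Rightarrow> sc_aux p xs [x] out
                      | y # ys \<Rightarrow> sc_aux p (x # xs) ys (out @ [y])))"
  by pat_completeness auto
termination
  by (relation "measure (\<lambda>(p, xs, stk, out). 2 * length xs + length stk)") auto

definition SC :: "nat list \<times> nat set \<Rightarrow> nat list \<Rightarrow> nat list" where
  "SC p tau = sc_aux p tau [] []"

definition west_s :: "nat list \<Rightarrow> nat list" where
  "west_s = SC ([2,1], {})"

definition Sort_n :: "(nat list \<Rightarrow> nat list) \<Rightarrow> nat \<Rightarrow> nat list set" where
  "Sort_n f n = {tau \<in> Sn n. west_s (f tau) = [1..<Suc n]}"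

definition Sort :: "(nat list \<Rightarrow> nat list) \<Rightarrow> nat list set" where
  "Sort f = (\<Union>n\<in>{1..}. Sort_n f n)"

definition perm_class :: "nat list set \<Rightarrow> bool" where
  "perm_class P \<longleftrightarrow> (\<forall>pi\<in>P. is_perm pi) \<and>
     (\<forall>pi\<in>P. \<forall>tau. is_perm tau \<and> tau \<noteq> [] \<and> contains pi tau \<longrightarrow> tau \<in> P)"

text \<open>The vincular pattern 32-underlined followed by 1: entries 0 and 1 adjacent.\<close>
definition pat_32_1 :: "nat list \<times> nat set" where
  "pat_32_1 = ([3,2,1], {0})"

end

theory Submission
  imports Defs
begin

text \<open>The class fails to be closed under containment at the pair 2314 \<supseteq> 123.
  When \<open>SC\<^sub>3\<^sub>2\<^sub>1\<close> runs on 123, pushing 3 onto the stack 2,1 would create an occurrence of the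
  pattern, so 2 is output before 3 and the result 231 is not sortable by \<open>s\<close>. On 2314 no stack
  ever contains an occurrence, so the input is simply reversed to 4132, which \<open>s\<close> sorts.\<close>

lemma vcontains_code [code]:
  "vcontains xs (tau, U) \<longleftrightarrow>
     (\<exists>idx\<in>set (List.n_lists (length tau) [0..<length xs]). sorted_wrt (<) idx \<and>
        same_order (map (\<lambda>k. xs ! k) idx) tau \<and>
        (\<forall>i\<in>U. Suc i < length tau \<longrightarrow> idx ! Suc i = Suc (idx ! i)))"
  unfolding vcontains_def set_n_lists by (simp add: subset_iff Bex_def) blast

lemma same_order_code [code]:
  "same_order a b \<longleftrightarrow> length a = length b \<and>
     (\<forall>i\<in>set [0..<length a]. \<forall>j\<in>set [0..<length a]. a ! i < a ! j \<longleftrightarrow> b ! i < b ! j)"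
  unfolding same_order_def by auto

lemma SC_32_1_2314: "SC pat_32_1 [2,3,1,4] = [4,1,3,2]"
  unfolding SC_def pat_32_1_def avoids_def by code_simp

lemma west_s_4132: "west_s [4,1,3,2] = [1,2,3,4]"
  unfolding west_s_def SC_def avoids_def by code_simp

lemma SC_32_1_123: "SC pat_32_1 [1,2,3] = [2,3,1]"
  unfolding SC_def pat_32_1_def avoids_def by code_simp

lemma west_s_231: "west_s [2,3,1] = [2,1,3]"
  unfolding west_s_def SC_def avoids_def by code_simp

lemma contains_2314_123: "contains [2,3,1,4] [1,2,3]"
  unfolding contains_def by code_simp

lemma mem_Sort_iff:
  "tau \<in> Sort f \<longleftrightarrow> is_perm tau \<and> tau \<noteq> [] \<and> west_s (f tau) = [1..<Suc (length tau)]"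
  unfolding Sort_def Sort_n_def Sn_def by (auto simp: Suc_le_eq)

theorem mainTheorem15:
  shows "\<not> perm_class (Sort (SC pat_32_1))"
proof
  assume "perm_class (Sort (SC pat_32_1))"
  moreover have "[2,3,1,4] \<in> Sort (SC pat_32_1)"
    unfolding mem_Sort_iff SC_32_1_2314 west_s_4132 is_perm_def by (auto simp: upt_rec)
  moreover have "is_perm [1,2,3]"
    unfolding is_perm_def by auto
  moreover have "[1,2,3] \<notin> Sort (SC pat_32_1)"
    unfolding mem_Sort_iff SC_32_1_123 west_s_231 by (simp add: upt_rec)
  ultimately show False
    using contains_2314_123 unfolding perm_class_def by blast
qed

end
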